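(* Let $\Delta$ be a finite set of defaults such that $\Delta^\rightarrow$ is consistent, and suppose $\Delta$ has Z-partition $(\Delta_0,\ldots,\Delta_n)$. Then for all $\theta,\phi\in L$: $\theta\mid\!\sim^\Delta_{lex}\phi$ if and only if $\theta\mid\!\sim_{\vec{\mathcal R}}\phi$, where $\vec{\mathcal R}=(\cdots((\vec{\mathcal U}^\emptyset*\vec{\mathcal U}^{\Delta^\rightarrow_0})*\vec{\mathcal U}^{\Delta^\rightarrow_1})*\cdots)*\vec{\mathcal U}^{\Delta^\rightarrow_n}$.
   Context: $L$ is a propositional language built from a finite set of propositional variables with the connectives $\neg,\wedge,\vee,\rightarrow,\top,\bot$; $W$ is the finite set of propositional worlds. For $\theta\in L$, $S_\theta=\{w\in W\mid w\models\theta\}$; $E\models\phi$ means $\bigcap_{\theta\in E}S_\theta\subseteq S_\phi$; $E$ is consistent iff $E\not\models\bot$. For $w\in W$ and $E\subseteq L$, $\mathrm{sent}_E(w)=\{\theta\in E\mid w\models\theta\}$. Defaults: a default is an expression $\lambda\Rightarrow\chi$ with $\lambda,\chi\in L$. For a set $\Gamma$ of defaults, $\Gamma^\rightarrow=\{\lambda\rightarrow\chi\mid\lambda\Rightarrow\chi\in\Gamma\}$. A default $\lambda\Rightarrow\chi$ is tolerated by $\Gamma$ iff $\{\lambda\wedge\chi\}\cup\Gamma^\rightarrow$ is consistent. The Z-partition of $\Delta$ is obtained by letting $\Delta_0$ be the set of defaults in $\Delta$ tolerated by $\Delta$, and, for $i\ge1$, $\Delta_i$ the set of defaults in $\Delta\setminus(\Delta_0\cup\cdots\cup\Delta_{i-1})$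 tolerated by $\Delta\setminus(\Delta_0\cup\cdots\cup\Delta_{i-1})$, stopping at the first $n$ with $\Delta_0\cup\cdots\cup\Delta_n=\Delta$ (the Z-partition exists when each step yields a nonempty set until $\Delta$ is exhausted). Lexicographic closure: for $A,B\subseteq\Delta$ let $A_i=A\cap\Delta_i$, $B_i=B\cap\Delta_i$; $A\ll_{lex}B$ iff there is $i$ with $|A_i|<|B_i|$ and $|A_j|=|B_j|$ for all $j>i$. Then $\theta\mid\!\sim^\Delta_{lex}\phi$ iff for every $\Gamma\subseteq\Delta$ such that $\Gamma^\rightarrow\cup\{\theta\}$ is consistent and $\Gamma$ is $\ll_{lex}$-maximal among such subsets (no such $\Gamma'$ with $\Gamma\ll_{lex}\Gamma'$), we have $\Gamma^\rightarrow\cup\{\theta\}\models\phi$. Sequences: finite sequences $\vec{\mathcal U}=(\mathcal U_0,\ldots,\mathcal U_k)$ of mutually disjoint subsets of $W$ (components may be empty, possibly repeatedly). $\mathrm{rank}^{\vec{\mathcal U}}(\theta)$ is the least $i$ with $\mathcal U_i\cap S_\theta\neq\emptyset$, $\infty$ if none ($i<\infty$ for all integers $i$). $\theta\mid\!\sim_{\vec{\mathcal U}}\phi$ iff $\mathrm{rank}^{\vec{\mathcal U}}(\theta)<\mathrm{rank}^{\vec{\mathcal U}}(\theta\wedge\neg\phi)$ or $\mathrm{rank}^{\vec{\mathcal U}}(\theta)=\infty$. $\vec{\mathcal U}$ is full iff $\bigcup_i\mathcal U_i=W$, empty iff $\bigcup_i\mathcal U_i=\emptyset$; $\Upsilon$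 is the set of sequences which are full or empty. Sequence revision: for $\vec{\mathcal U}=(\mathcal U_0,\ldots,\mathcal U_k)$, $\vec{\mathcal V}=(\mathcal V_0,\ldots,\mathcal V_m)$ in $\Upsilon$, if $\vec{\mathcal U}$ is full then $\vec{\mathcal U}*\vec{\mathcal V}=(\mathcal U_0\cap\mathcal V_0,\ldots,\mathcal U_k\cap\mathcal V_0,\ \mathcal U_0\cap\mathcal V_1,\ldots,\mathcal U_k\cap\mathcal V_1,\ \ldots,\ \mathcal U_0\cap\mathcal V_m,\ldots,\mathcal U_k\cap\mathcal V_m)$; otherwise $\vec{\mathcal U}*\vec{\mathcal V}=\vec{\mathcal V}$. For finite $E\subseteq L$ with $|E|=k$: $\mathcal U^E_i=\{w\in W\mid|\mathrm{sent}_E(w)|=k-i\}$ ($i=0,\ldots,k$) if $E\not\models\bot$, and $\mathcal U^E_i=\emptyset$ otherwise; $\vec{\mathcal U}^E=(\mathcal U^E_0,\ldots,\mathcal U^E_k)$. In particular $\vec{\mathcal U}^\emptyset=(W)$. *)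

theory Defs
  imports Main "HOL-Library.Extended_Nat"
begin

datatype 'v form =
    Var 'v
  | Neg "'v form"
  | Conj "'v form" "'v form"
  | Disj "'v form" "'v form"
  | Imp "'v form" "'v form"
  | Top
  | Bot

text \<open>Worlds are valuations; with a finite variable type the set W = UNIV of worlds is finite.\<close>
type_synonym 'v world = "'v \<Rightarrow> bool"

fun sat :: "'v world \<Rightarrow> 'v form \<Rightarrow> bool" where
  "sat w (Var p) = w p"
| "sat w (Neg a) = (\<not> sat w a)"
| "sat w (Conj a b) = (sat w a \<and> sat w b)"
| "sat w (Disj a b) = (sat w a \<or> sat w b)"
| "sat w (Imp a b) = (sat w a \<longrightarrow> sat w b)"
| "sat w Top = True"
| "sat w Bot = False"

definition Sof :: "'v form \<Rightarrow> 'v world set" where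
  "Sof \<theta> = {w. sat w \<theta>}"

definition entails :: "'v form set \<Rightarrow> 'v form \<Rightarrow> bool" where
  "entails E \<phi> \<longleftrightarrow> (\<Inter>\<theta>\<in>E. Sof \<theta>) \<subseteq> Sof \<phi>"

definition consistent :: "'v form set \<Rightarrow> bool" where
  "consistent E \<longleftrightarrow> \<not> entails E Bot"

definition sent :: "'v form set \<Rightarrow> 'v world \<Rightarrow> 'v form set" where
  "sent E w = {\<theta>\<in>E. sat w \<theta>}"

type_synonym 'v default = "'v form \<times> 'v form"

definition imps :: "'v default set \<Rightarrow> 'v form set" where
  "imps \<Gamma> = (\<lambda>(l, c). Imp l c) ` \<Gamma>"

definition tolerated :: "'v default \<Rightarrow> 'v default set \<Rightarrow> bool" where
  "tolerated d \<Gamma> \<longleftrightarrow> consistent ({Conj (fst d) (snd d)} \<union> imps \<Gamma>)"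

definition prefix_union :: "'a set list \<Rightarrow> nat \<Rightarrow> 'a set" where
  "prefix_union Ps i = (\<Union>j<i. Ps ! j)"

definition is_Zpartition :: "'v default set \<Rightarrow> 'v default set list \<Rightarrow> bool" where
  "is_Zpartition \<Delta> Ps \<longleftrightarrow>
     Ps \<noteq> [] \<and>
     (\<forall>i<length Ps. Ps ! i =
        {d \<in> \<Delta> - prefix_union Ps i. tolerated d (\<Delta> - prefix_union Ps i)}) \<and>
     (\<forall>i<length Ps. i \<noteq> 0 \<longrightarrow> Ps ! i \<noteq> {}) \<and>
     prefix_union Ps (length Ps) = \<Delta> \<and>
     (\<forall>i<length Ps - 1. prefix_union Ps (Suc i) \<noteq> \<Delta>)"

definition lex_less :: "'v default set list \<Rightarrow> 'v default set \<Rightarrow> 'v default set \<Rightarrow> bool" where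
  "lex_less Ps A B \<longleftrightarrow>
     (\<exists>i<length Ps. card (A \<inter> Ps ! i) < card (B \<inter> Ps ! i) \<and>
        (\<forall>j. i < j \<and> j < length Ps \<longrightarrow> card (A \<inter> Ps ! j) = card (B \<inter> Ps ! j)))"

definition lex_cands :: "'v default set \<Rightarrow> 'v form \<Rightarrow> 'v default set set" where
  "lex_cands \<Delta> \<theta> = {\<Gamma>. \<Gamma> \<subseteq> \<Delta> \<and> consistent (imps \<Gamma> \<union> {\<theta>})}"

definition lex_entails ::
  "'v default set \<Rightarrow> 'v default set list \<Rightarrow> 'v form \<Rightarrow> 'v form \<Rightarrow> bool" where
  "lex_entails \<Delta> Ps \<theta> \<phi> \<longleftrightarrow>
     (\<forall>\<Gamma>\<in>lex_cands \<Delta> \<theta>.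
        (\<not> (\<exists>\<Gamma>'\<in>lex_cands \<Delta> \<theta>. lex_less Ps \<Gamma> \<Gamma>')) \<longrightarrow> entails (imps \<Gamma> \<union> {\<theta>}) \<phi>)"

type_synonym 'v wseq = "'v world set list"

definition rank :: "'v wseq \<Rightarrow> 'v form \<Rightarrow> enat" where
  "rank Us \<theta> =
     (if \<exists>i<length Us. Us ! i \<inter> Sof \<theta> \<noteq> {}
      then enat (LEAST i. i < length Us \<and> Us ! i \<inter> Sof \<theta> \<noteq> {})
      else \<infinity>)"

definition seq_entails :: "'v wseq \<Rightarrow> 'v form \<Rightarrow> 'v form \<Rightarrow> bool" where
  "seq_entails Us \<theta> \<phi> \<longleftrightarrow>
     rank Us \<theta> < rank Us (Conj \<theta> (Neg \<phi>)) \<or> rank Us \<theta> = \<infinity>"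

definition full :: "'v wseq \<Rightarrow> bool" where
  "full Us \<longleftrightarrow> \<Union>(set Us) = UNIV"

definition seq_rev :: "'v wseq \<Rightarrow> 'v wseq \<Rightarrow> 'v wseq" (infixl "\<star>" 70) where
  "seq_rev Us Vs = (if full Us then concat (map (\<lambda>V. map (\<lambda>U. U \<inter> V) Us) Vs) else Vs)"

definition Useq :: "'v form set \<Rightarrow> 'v wseq" where
  "Useq E = (let k = card E in
     map (\<lambda>i. if consistent E then {w. card (sent E w) = k - i} else {}) [0..<Suc k])"

end

(*
  Both sides select, among the models of theta, the best worlds for one and the same preorder:
  w is at least as good as v iff the defaults of Delta satisfied by w are not lexicographically
  below those satisfied by v.

  For the lexicographic closure, a maximal candidate Gamma lies inside the set of defaults
  satisfied by some theta-world w, and a strict inclusion would make Gamma lexicographically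
  smaller; so the maximal candidates are exactly the satisfied sets of the preferred theta-worlds.

  For the sequence, U^E ranks a world by the number of formulas of E it violates, and revising a
  full sequence of length n by a ranking s produces the ranking s * n + r: the new part becomes the
  most significant digit. After all revisions each world sits in the single component numbered in
  mixed radix by its violation counts on Delta_n, ..., Delta_0, and comparing these numbers is the
  lexicographic comparison. The rank of theta is the least number of a theta-world.
*)

theory Submission
  imports Defs
begin

section \<open>Mixed-radix numbers and minima\<close>

lemma mult_add_less_mult_add_iff:
  fixes a a' b b' m :: nat
  assumes "b < m" and "b' < m"
  shows "a * m + b < a' * m + b' \<longleftrightarrow> a < a' \<or> a = a' \<and> b < b'"
proof -
  have less: "a * m + b < a' * m + b'" if "a < a'" "b < m" for a a' b b' :: nat
  proof -
    have "a * m + b < Suc a * m" using \<open>b < m\<close> by simp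
    also have "\<dots> \<le> a' * m" using \<open>a < a'\<close> by (intro mult_le_mono1) simp
    finally show ?thesis by simp
  qed
  show ?thesis
    using less[of a a' b b'] less[of a' a b' b] assms by (cases a a' rule: linorder_cases) auto
qed

lemma mult_add_eq_mult_add_iff:
  fixes a a' b b' m :: nat
  assumes "b < m" and "b' < m"
  shows "a * m + b = a' * m + b' \<longleftrightarrow> a = a' \<and> b = b'"
proof -
  have "(a * m + b) div m = a" "(a * m + b) mod m = b" "(a' * m + b') div m = a'" "(a' * m + b') mod m = b'"
    using assms by simp_all
  then show ?thesis by metis
qed

lemma INF_enat_attained:
  fixes r :: "'a \<Rightarrow> nat"
  assumes "X \<noteq> {}"
  obtains w where "w \<in> X" "\<forall>v\<in>X. r w \<le> r v" "(INF v\<in>X. enat (r v)) = enat (r w)"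
proof -
  obtain w where w: "w \<in> X" "\<forall>v\<in>X. r w \<le> r v"
    using assms ex_has_least_nat[of "\<lambda>w. w \<in> X" _ r] by blast
  then have "(INF v\<in>X. enat (r v)) = enat (r w)"
    by (intro antisym INF_lower INF_greatest) auto
  with w that show thesis by blast
qed

lemma enat_less_INF_iff: "enat a < (INF w\<in>X. enat (r w)) \<longleftrightarrow> (\<forall>w\<in>X. a < r w)"
  by (simp add: Suc_ile_eq[symmetric] le_INF_iff Suc_le_eq)

lemma INF_less_INF_counterexamples_iff:
  fixes r :: "'a \<Rightarrow> nat"
  shows "(INF w\<in>X. enat (r w)) < (INF w\<in>{w\<in>X. \<not> P w}. enat (r w)) \<or> (INF w\<in>X. enat (r w)) = \<infinity>
    \<longleftrightarrow> (\<forall>w\<in>X. (\<forall>v\<in>X. r w \<le> r v) \<longrightarrow> P w)"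
proof (cases "X = {}")
  case True
  then show ?thesis by (simp add: top_enat_def)
next
  case False
  then obtain w0 where w0: "w0 \<in> X" "\<forall>v\<in>X. r w0 \<le> r v" "(INF v\<in>X. enat (r v)) = enat (r w0)"
    by (rule INF_enat_attained)
  have "(\<forall>u\<in>X. \<not> P u \<longrightarrow> r w0 < r u) \<longleftrightarrow> (\<forall>w\<in>X. (\<forall>v\<in>X. r w \<le> r v) \<longrightarrow> P w)"
    using w0(1,2) by (meson le_trans not_le)
  then show ?thesis
    using w0(3) by (simp add: enat_less_INF_iff) blast
qed

section \<open>Lexicographic comparison\<close>

lemma lex_less_Nil: "\<not> lex_less [] A B"
  by (simp add: lex_less_def)

lemma last_difference_Suc_iff:
  fixes f g :: "nat \<Rightarrow> nat"
  shows "(\<exists>i<Suc n. f i < g i \<and> (\<forall>j. i < j \<and> j < Suc n \<longrightarrow> f j = g j)) \<longleftrightarrow>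
     f n < g n \<or> f n = g n \<and> (\<exists>i<n. f i < g i \<and> (\<forall>j. i < j \<and> j < n \<longrightarrow> f j = g j))"
    (is "?L \<longleftrightarrow> ?R")
proof
  assume ?L
  then obtain i where i: "i < Suc n" "f i < g i" "\<forall>j. i < j \<and> j < Suc n \<longrightarrow> f j = g j"
    by blast
  show ?R
  proof (cases "i = n")
    case True
    then show ?thesis using i by simp
  next
    case False
    then show ?thesis using i by (metis less_SucI less_Suc_eq lessI)
  qed
next
  assume ?R
  then show ?L by (metis less_Suc_eq lessI not_less_eq)
qed

lemma lex_less_snoc:
  "lex_less (Ps @ [D]) A B \<longleftrightarrow>
     card (A \<inter> D) < card (B \<inter> D) \<or> card (A \<inter> D) = card (B \<inter> D) \<and> lex_less Ps A B"
proof -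
  have "\<And>i. i < length Ps \<Longrightarrow> (Ps @ [D]) ! i = Ps ! i" by (simp add: nth_append)
  then show ?thesis
    unfolding lex_less_def length_append_singleton last_difference_Suc_iff
    by (simp cong: conj_cong)
qed

lemma lex_less_cong:
  assumes "\<And>D. D \<in> set Ps \<Longrightarrow> A \<inter> D = A' \<inter> D \<and> B \<inter> D = B' \<inter> D"
  shows "lex_less Ps A B \<longleftrightarrow> lex_less Ps A' B'"
proof -
  have "A \<inter> Ps ! i = A' \<inter> Ps ! i" "B \<inter> Ps ! i = B' \<inter> Ps ! i" if "i < length Ps" for i
    using assms nth_mem[OF that] by blast+
  then show ?thesis
    unfolding lex_less_def by (simp cong: conj_cong)
qed

lemma lex_less_Int_cover:
  assumes "\<Union>(set Ps) \<subseteq> \<Delta>"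
  shows "lex_less Ps (\<Delta> \<inter> A) (\<Delta> \<inter> B) \<longleftrightarrow> lex_less Ps A B"
  by (rule lex_less_cong) (use assms in blast)

lemma lex_less_if_psubset:
  assumes "\<forall>D\<in>set Ps. finite D" and "A \<subseteq> B" and "d \<in> B - A" and "d \<in> \<Union>(set Ps)"
  shows "lex_less Ps A B"
  using assms
proof (induction Ps rule: rev_induct)
  case Nil
  then show ?case by simp
next
  case (snoc D Ps)
  have "card (A \<inter> D) \<le> card (B \<inter> D)"
    using snoc.prems(1,2) by (intro card_mono) auto
  moreover have "card (A \<inter> D) < card (B \<inter> D)" if "d \<in> D"
    using snoc.prems that by (intro psubset_card_mono) auto
  moreover have "lex_less Ps A B" if "d \<notin> D"
    using snoc that by simp
  ultimately show ?case
    unfolding lex_less_snoc by linarith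
qed

lemma lex_less_subset_right:
  assumes "\<forall>D\<in>set Ps. finite D" and "lex_less Ps A B" and "B \<subseteq> C"
  shows "lex_less Ps A C"
  using assms
proof (induction Ps rule: rev_induct)
  case Nil
  then show ?case by (simp add: lex_less_Nil)
next
  case (snoc D Ps)
  have "card (B \<inter> D) \<le> card (C \<inter> D)"
    using snoc.prems(1,3) by (intro card_mono) auto
  then show ?case
    using snoc by (auto simp: lex_less_snoc)
qed

section \<open>Lexicographic closure\<close>

definition sat_defaults :: "'v world \<Rightarrow> 'v default set" where
  "sat_defaults w = {d. sat w (Imp (fst d) (snd d))}"

lemma sat_imps_iff: "(\<forall>x\<in>imps \<Gamma>. sat w x) \<longleftrightarrow> \<Gamma> \<subseteq> sat_defaults w"
  by (auto simp: imps_def sat_defaults_def)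

lemma consistent_iff: "consistent E \<longleftrightarrow> (\<exists>w. \<forall>x\<in>E. sat w x)"
  by (auto simp: consistent_def entails_def Sof_def)

lemma entails_iff: "entails E \<phi> \<longleftrightarrow> (\<forall>w. (\<forall>x\<in>E. sat w x) \<longrightarrow> sat w \<phi>)"
  by (auto simp: entails_def Sof_def)

lemma card_imps: "card (imps \<Gamma>) = card \<Gamma>"
  unfolding imps_def by (rule card_image) (auto simp: inj_on_def)

lemma sent_imps: "sent (imps \<Gamma>) w = imps (\<Gamma> \<inter> sat_defaults w)"
  by (auto simp: sent_def imps_def sat_defaults_def)

lemma lex_cands_iff: "\<Gamma> \<in> lex_cands \<Delta> \<theta> \<longleftrightarrow> \<Gamma> \<subseteq> \<Delta> \<and> (\<exists>w\<in>Sof \<theta>. \<Gamma> \<subseteq> sat_defaults w)"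
  by (auto simp: lex_cands_def consistent_iff sat_imps_iff Sof_def)

lemma entails_imps_iff:
  "entails (imps \<Gamma> \<union> {\<theta>}) \<phi> \<longleftrightarrow> (\<forall>w\<in>Sof \<theta>. \<Gamma> \<subseteq> sat_defaults w \<longrightarrow> sat w \<phi>)"
  by (auto simp: entails_iff sat_imps_iff Sof_def)

definition lex_maximal ::
  "'v default set \<Rightarrow> 'v default set list \<Rightarrow> 'v form \<Rightarrow> 'v default set \<Rightarrow> bool" where
  "lex_maximal \<Delta> Ps \<theta> \<Gamma> \<longleftrightarrow>
     \<Gamma> \<in> lex_cands \<Delta> \<theta> \<and> \<not> (\<exists>\<Gamma>'\<in>lex_cands \<Delta> \<theta>. lex_less Ps \<Gamma> \<Gamma>')"

lemma lex_entails_iff_lex_maximal: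
  "lex_entails \<Delta> Ps \<theta> \<phi> \<longleftrightarrow>
    (\<forall>\<Gamma>. lex_maximal \<Delta> Ps \<theta> \<Gamma> \<longrightarrow> (\<forall>w\<in>Sof \<theta>. \<Gamma> \<subseteq> sat_defaults w \<longrightarrow> sat w \<phi>))"
  unfolding lex_entails_def lex_maximal_def entails_imps_iff by blast

lemma lex_maximal_sat_defaults_iff:
  assumes "\<forall>D\<in>set Ps. finite D" and "w \<in> Sof \<theta>"
  shows "lex_maximal \<Delta> Ps \<theta> (\<Delta> \<inter> sat_defaults w) \<longleftrightarrow>
    (\<forall>v\<in>Sof \<theta>. \<not> lex_less Ps (\<Delta> \<inter> sat_defaults w) (\<Delta> \<inter> sat_defaults v))"
proof -
  have cand: "\<Delta> \<inter> sat_defaults v \<in> lex_cands \<Delta> \<theta>" if "v \<in> Sof \<theta>" for v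
    using that by (auto simp: lex_cands_iff)
  have "\<exists>v\<in>Sof \<theta>. lex_less Ps A (\<Delta> \<inter> sat_defaults v)"
    if "lex_less Ps A \<Gamma>" "\<Gamma> \<in> lex_cands \<Delta> \<theta>" for A \<Gamma>
  proof -
    obtain v where "v \<in> Sof \<theta>" "\<Gamma> \<subseteq> \<Delta> \<inter> sat_defaults v"
      using \<open>\<Gamma> \<in> lex_cands \<Delta> \<theta>\<close> by (auto simp: lex_cands_iff)
    then show ?thesis
      using \<open>lex_less Ps A \<Gamma>\<close> lex_less_subset_right[OF assms(1)] by blast
  qed
  then show ?thesis
    using cand assms(2) unfolding lex_maximal_def by blast
qed

lemma lex_maximal_eq_sat_defaults:
  assumes "\<forall>D\<in>set Ps. finite D" and "\<Delta> \<subseteq> \<Union>(set Ps)"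
    and "lex_maximal \<Delta> Ps \<theta> \<Gamma>" and "w \<in> Sof \<theta>" and "\<Gamma> \<subseteq> sat_defaults w"
  shows "\<Gamma> = \<Delta> \<inter> sat_defaults w"
proof (rule ccontr)
  have \<Gamma>: "\<Gamma> \<subseteq> \<Delta> \<inter> sat_defaults w"
    using assms(3,5) by (auto simp: lex_maximal_def lex_cands_iff)
  assume "\<Gamma> \<noteq> \<Delta> \<inter> sat_defaults w"
  with \<Gamma> obtain d where "d \<in> \<Delta> \<inter> sat_defaults w - \<Gamma>"
    by blast
  then have "lex_less Ps \<Gamma> (\<Delta> \<inter> sat_defaults w)"
    using \<Gamma> assms(1,2) by (intro lex_less_if_psubset) auto
  moreover have "\<Delta> \<inter> sat_defaults w \<in> lex_cands \<Delta> \<theta>"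
    using assms(4) by (auto simp: lex_cands_iff)
  ultimately show False
    using assms(3) by (auto simp: lex_maximal_def)
qed

lemma lex_maximal_obtains_sat_defaults:
  assumes "\<forall>D\<in>set Ps. finite D" and "\<Delta> \<subseteq> \<Union>(set Ps)" and "lex_maximal \<Delta> Ps \<theta> \<Gamma>"
  obtains w where "w \<in> Sof \<theta>" and "\<Gamma> = \<Delta> \<inter> sat_defaults w"
proof -
  obtain w where "w \<in> Sof \<theta>" "\<Gamma> \<subseteq> sat_defaults w"
    using assms(3) by (auto simp: lex_maximal_def lex_cands_iff)
  with lex_maximal_eq_sat_defaults[OF assms] that show thesis
    by blast
qed

lemma lex_entails_iff_preferred_models:
  assumes "\<forall>D\<in>set Ps. finite D" and "\<Delta> \<subseteq> \<Union>(set Ps)"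
  shows "lex_entails \<Delta> Ps \<theta> \<phi> \<longleftrightarrow>
    (\<forall>w\<in>Sof \<theta>. (\<forall>v\<in>Sof \<theta>. \<not> lex_less Ps (\<Delta> \<inter> sat_defaults w) (\<Delta> \<inter> sat_defaults v))
       \<longrightarrow> sat w \<phi>)"
proof -
  let ?G = "\<lambda>w. \<Delta> \<inter> sat_defaults w"
  define safe where "safe \<Gamma> \<longleftrightarrow> (\<forall>u\<in>Sof \<theta>. \<Gamma> \<subseteq> sat_defaults u \<longrightarrow> sat u \<phi>)" for \<Gamma>
  note maximal_eq = lex_maximal_eq_sat_defaults[OF assms]
  have "lex_entails \<Delta> Ps \<theta> \<phi> \<longleftrightarrow> (\<forall>\<Gamma>. lex_maximal \<Delta> Ps \<theta> \<Gamma> \<longrightarrow> safe \<Gamma>)"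
    unfolding lex_entails_iff_lex_maximal safe_def ..
  also have "\<dots> \<longleftrightarrow> (\<forall>w\<in>Sof \<theta>. lex_maximal \<Delta> Ps \<theta> (?G w) \<longrightarrow> safe (?G w))"
    using lex_maximal_obtains_sat_defaults[OF assms] by metis
  also have "\<dots> \<longleftrightarrow> (\<forall>w\<in>Sof \<theta>. lex_maximal \<Delta> Ps \<theta> (?G w) \<longrightarrow> sat w \<phi>)"
  proof
    assume "\<forall>w\<in>Sof \<theta>. lex_maximal \<Delta> Ps \<theta> (?G w) \<longrightarrow> safe (?G w)"
    then show "\<forall>w\<in>Sof \<theta>. lex_maximal \<Delta> Ps \<theta> (?G w) \<longrightarrow> sat w \<phi>"
      unfolding safe_def by blast
  next
    assume sat_max: "\<forall>w\<in>Sof \<theta>. lex_maximal \<Delta> Ps \<theta> (?G w) \<longrightarrow> sat w \<phi>"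
    have "safe (?G w)" if "w \<in> Sof \<theta>" "lex_maximal \<Delta> Ps \<theta> (?G w)" for w
      unfolding safe_def
    proof (intro ballI impI)
      fix u assume "u \<in> Sof \<theta>" "?G w \<subseteq> sat_defaults u"
      then have "lex_maximal \<Delta> Ps \<theta> (?G u)"
        using maximal_eq[of \<theta> "?G w" u] that(2) by simp
      then show "sat u \<phi>"
        using sat_max \<open>u \<in> Sof \<theta>\<close> by blast
    qed
    then show "\<forall>w\<in>Sof \<theta>. lex_maximal \<Delta> Ps \<theta> (?G w) \<longrightarrow> safe (?G w)"
      by blast
  qed
  also have "\<dots> \<longleftrightarrow> (\<forall>w\<in>Sof \<theta>. (\<forall>v\<in>Sof \<theta>. \<not> lex_less Ps (?G w) (?G v)) \<longrightarrow> sat w \<phi>)"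
    by (simp add: lex_maximal_sat_defaults_iff[OF assms(1)] cong: ball_cong)
  finally show ?thesis .
qed

section \<open>Revised sequences\<close>

definition level_seq :: "('a \<Rightarrow> nat) \<Rightarrow> nat \<Rightarrow> 'a set list" where
  "level_seq r n = map (\<lambda>i. r -` {i}) [0..<n]"

lemma length_level_seq [simp]: "length (level_seq r n) = n"
  by (simp add: level_seq_def)

lemma full_level_seq: "\<forall>w. r w < n \<Longrightarrow> full (level_seq r n)"
  by (auto simp: full_def level_seq_def)

lemma seq_rev_level_seq:
  assumes "\<forall>w. r w < m"
  shows "seq_rev (level_seq r m) (level_seq s n) = level_seq (\<lambda>w. s w * m + r w) (n * m)"
proof (induction n)
  case 0
  then show ?case
    using full_level_seq[OF assms] by (simp add: seq_rev_def level_seq_def)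
next
  case (Suc n)
  let ?g = "\<lambda>w. s w * m + r w"
  have "?g -` {n * m + i} = r -` {i} \<inter> s -` {n}" if "i < m" for i
    using assms that by (auto simp: mult_add_eq_mult_add_iff)
  then have last_block:
    "map (\<lambda>U. U \<inter> s -` {n}) (level_seq r m) = map (\<lambda>i. ?g -` {i}) [n * m..<n * m + m]"
    by (simp add: level_seq_def list_eq_iff_nth_eq)
  have "seq_rev (level_seq r m) (level_seq s (Suc n)) =
      seq_rev (level_seq r m) (level_seq s n) @ map (\<lambda>U. U \<inter> s -` {n}) (level_seq r m)"
    using full_level_seq[OF assms] by (simp add: seq_rev_def level_seq_def)
  also have "\<dots> = level_seq ?g (n * m + m)"
    unfolding Suc last_block by (simp add: level_seq_def upt_add_eq_append[of 0 "n * m" m])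
  finally show ?case
    by (simp add: add.commute)
qed

lemma Useq_eq_level_seq:
  assumes "finite E" and "consistent E"
  shows "Useq E = level_seq (\<lambda>w. card E - card (sent E w)) (Suc (card E))"
proof -
  have "card (sent E w) \<le> card E" for w
    using assms(1) by (intro card_mono) (auto simp: sent_def)
  then have level: "{w. card (sent E w) = card E - i} = (\<lambda>w. card E - card (sent E w)) -` {i}"
    if "i < Suc (card E)" for i
    using that by auto
  show ?thesis
    unfolding Useq_def Let_def level_seq_def by (intro map_cong) (auto simp: assms(2) intro!: level)
qed

lemma rank_level_seq:
  assumes "\<forall>w. r w < n"
  shows "rank (level_seq r n) \<chi> = (INF w\<in>Sof \<chi>. enat (r w))"
proof -
  have hit: "i < n \<and> level_seq r n ! i \<inter> Sof \<chi> \<noteq> {} \<longleftrightarrow> i \<in> r ` Sof \<chi>" for i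
    using assms by (auto simp: level_seq_def)
  show ?thesis
  proof (cases "Sof \<chi> = {}")
    case True
    then show ?thesis
      using hit by (auto simp: rank_def top_enat_def)
  next
    case False
    then obtain w0 where w0: "w0 \<in> Sof \<chi>" "\<forall>v\<in>Sof \<chi>. r w0 \<le> r v"
      and inf: "(INF v\<in>Sof \<chi>. enat (r v)) = enat (r w0)"
      by (rule INF_enat_attained)
    have "(LEAST i. i < n \<and> level_seq r n ! i \<inter> Sof \<chi> \<noteq> {}) = r w0"
      unfolding hit using w0 by (intro Least_equality) auto
    moreover have "\<exists>i<n. level_seq r n ! i \<inter> Sof \<chi> \<noteq> {}"
      using hit w0(1) by blast
    ultimately show ?thesis
      using inf by (simp add: rank_def)
  qed
qed

lemma seq_entails_level_seq:
  assumes "\<forall>w. r w < n"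
  shows "seq_entails (level_seq r n) \<theta> \<phi> \<longleftrightarrow>
    (\<forall>w\<in>Sof \<theta>. (\<forall>v\<in>Sof \<theta>. r w \<le> r v) \<longrightarrow> sat w \<phi>)"
proof -
  have "Sof (Conj \<theta> (Neg \<phi>)) = {w\<in>Sof \<theta>. \<not> sat w \<phi>}"
    by (auto simp: Sof_def)
  then show ?thesis
    unfolding seq_entails_def rank_level_seq[OF assms] by (simp add: INF_less_INF_counterexamples_iff)
qed

lemma seq_rev_Useq_imps:
  assumes "\<forall>w. r w < n" and "finite D" and "consistent (imps D)"
  shows "seq_rev (level_seq r n) (Useq (imps D)) =
    level_seq (\<lambda>w. (card D - card (sat_defaults w \<inter> D)) * n + r w) (Suc (card D) * n)"
proof -
  have "finite (imps D)"
    using assms(2) by (simp add: imps_def)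
  then have "Useq (imps D) = level_seq (\<lambda>w. card D - card (sat_defaults w \<inter> D)) (Suc (card D))"
    using Useq_eq_level_seq[OF _ assms(3)] by (simp add: card_imps sent_imps Int_commute)
  then show ?thesis
    using seq_rev_level_seq[OF assms(1)] by simp
qed

lemma foldl_seq_rev_Useq_level_seq:
  assumes "\<forall>D\<in>set Ps. finite D \<and> consistent (imps D)"
  shows "\<exists>r n. foldl seq_rev [UNIV] (map (\<lambda>D. Useq (imps D)) Ps) = level_seq r n \<and> (\<forall>w. r w < n) \<and>
    (\<forall>w v. r w < r v \<longleftrightarrow> lex_less Ps (sat_defaults v) (sat_defaults w))"
  using assms
proof (induction Ps rule: rev_induct)
  case Nil
  show ?case
    by (intro exI[of _ "\<lambda>_. 0"] exI[of _ 1]) (simp add: level_seq_def lex_less_Nil)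
next
  case (snoc D Ps)
  then obtain r n where fold: "foldl seq_rev [UNIV] (map (\<lambda>D. Useq (imps D)) Ps) = level_seq r n"
    and bound: "\<forall>w. r w < n"
    and order: "\<forall>w v. r w < r v \<longleftrightarrow> lex_less Ps (sat_defaults v) (sat_defaults w)"
    by auto
  define c where "c w = card (sat_defaults w \<inter> D)" for w
  have D: "finite D" "consistent (imps D)"
    using snoc.prems by auto
  have c_le: "c w \<le> card D" for w
    unfolding c_def using D(1) by (intro card_mono) auto
  have fold': "foldl seq_rev [UNIV] (map (\<lambda>D. Useq (imps D)) (Ps @ [D])) =
      level_seq (\<lambda>w. (card D - c w) * n + r w) (Suc (card D) * n)"
    using fold seq_rev_Useq_imps[OF bound D] by (simp add: c_def)
  have bound': "(card D - c w) * n + r w < Suc (card D) * n" for w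
  proof -
    have "(card D - c w) * n + r w < Suc (card D - c w) * n"
      using bound by simp
    also have "\<dots> \<le> Suc (card D) * n"
      by (intro mult_le_mono1) simp
    finally show ?thesis .
  qed
  have order': "(card D - c w) * n + r w < (card D - c v) * n + r v \<longleftrightarrow>
      lex_less (Ps @ [D]) (sat_defaults v) (sat_defaults w)" for w v
  proof -
    have "(card D - c w) * n + r w < (card D - c v) * n + r v \<longleftrightarrow>
        card D - c w < card D - c v \<or> card D - c w = card D - c v \<and> r w < r v"
      using bound by (intro mult_add_less_mult_add_iff) auto
    also have "\<dots> \<longleftrightarrow> c v < c w \<or> c v = c w \<and> r w < r v"
      using c_le[of w] c_le[of v] by auto
    also have "\<dots> \<longleftrightarrow> lex_less (Ps @ [D]) (sat_defaults v) (sat_defaults w)"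
      using order by (simp add: lex_less_snoc c_def)
    finally show ?thesis .
  qed
  show ?case
    using fold' bound' order' by blast
qed

theorem theorem2:
  fixes \<Delta> :: "('v::finite) default set"
    and Ps :: "'v default set list"
  assumes "finite \<Delta>"
    and "consistent (imps \<Delta>)"
    and "is_Zpartition \<Delta> Ps"
  shows "\<forall>\<theta> \<phi>. lex_entails \<Delta> Ps \<theta> \<phi> \<longleftrightarrow>
           seq_entails (foldl seq_rev [UNIV] (map (\<lambda>D. Useq (imps D)) Ps)) \<theta> \<phi>"
proof -
  have "prefix_union Ps (length Ps) = \<Delta>"
    using assms(3) by (simp add: is_Zpartition_def)
  then have cover: "\<Union>(set Ps) = \<Delta>"
    by (auto simp: prefix_union_def set_conv_nth)
  then have parts: "\<forall>D\<in>set Ps. finite D \<and> consistent (imps D)"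
    using assms(1,2) by (meson Union_upper consistent_iff sat_imps_iff finite_subset subset_trans)
  then obtain r n where fold: "foldl seq_rev [UNIV] (map (\<lambda>D. Useq (imps D)) Ps) = level_seq r n"
    and bound: "\<forall>w. r w < n"
    and order: "\<forall>w v. r w < r v \<longleftrightarrow> lex_less Ps (sat_defaults v) (sat_defaults w)"
    using foldl_seq_rev_Useq_level_seq by blast
  have "r w \<le> r v \<longleftrightarrow> \<not> lex_less Ps (\<Delta> \<inter> sat_defaults w) (\<Delta> \<inter> sat_defaults v)" for w v
    using order lex_less_Int_cover[of Ps \<Delta>] cover by (simp add: not_less[symmetric])
  moreover have "\<forall>D\<in>set Ps. finite D" "\<Delta> \<subseteq> \<Union>(set Ps)"
    using parts cover by auto
  ultimately show ?thesis
    unfolding fold seq_entails_level_seq[OF bound] by (simp add: lex_entails_iff_preferred_models)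
qed

end
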